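(* Fix $j\in\{1,\ldots,K\}$ and $\Gamma^c_j\in\mathbb{R}$. For every $N\ge 1$, the circulation of $\psi^*_{N,j}$ around $L_j$ equals $\Gamma^c_j\frac{2K-1}{K}$, and its circulation around $L_k$ equals $-\Gamma^c_j/K$ for every $k\ne j$.
   Context: Let $K\ge 2$. Let $L_k=\{z:|z-c_k|=R_k\}$, $k=1,\dots,K$, be circles in $\mathbb{C}$ with pairwise disjoint closed disks, $\operatorname{int}L_k$ the open disk, and $T_k(z)=c_k+\frac{R_k^2}{\bar z-\bar c_k}$ the inversion in $L_k$, with $T_k(c_k)=\infty$, $T_k(\infty)=c_k$. For $M\ge0$, the level-$M$ points of $c_j$ are the multiset $T_{i_1}\circ\cdots\circ T_{i_M}(c_j)$ over words $(i_1,\ldots,i_M)\in\{1,\ldots,K\}^M$ with $i_k\ne i_{k+1}$ (level 0 is $c_j$; the level-1 point $T_j(c_j)=\infty$ is one of them). Define $\psi_{N,j}(z)=-\frac{\Gamma^c_j}{2\pi}\sum_{M=0}^{N}(-1)^M\sum_{\zeta\in\text{level }M,\ \zeta\ne\infty}\log|z-\zeta|$ (the term for $\zeta=\infty$ is omitted) and $\psi^*_{N,j}=\frac{(K-1)\psi_{N,j}+\psi_{N+1,j}}{K}$. Circulation: for a finite sum $\psi(z)=-\frac{1}{2\pi}\sum_k\Gamma_k\log|z-\zeta_k|$ with no $\zeta_k$ on $L$, the circulation around a circle $L$ is the sum of $\Gamma_k$ over $\zeta_k$ inside $L$ (equivalently $-\oint_{L}\partial\psi/\partial n\,ds$, counterclockwise,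 outward normal). *)

theory Defs
  imports "HOL-Analysis.Analysis" "HOL-Library.Multiset"
begin

text \<open>Extended complex plane: None represents the point at infinity.\<close>

definition inversion :: "(nat \<Rightarrow> complex) \<Rightarrow> (nat \<Rightarrow> real) \<Rightarrow> nat \<Rightarrow> complex option \<Rightarrow> complex option" where
  "inversion c R k p = (case p of
      None \<Rightarrow> Some (c k)
    | Some z \<Rightarrow> (if z = c k then None else Some (c k + complex_of_real ((R k)^2) / cnj (z - c k))))"

definition words :: "nat \<Rightarrow> nat \<Rightarrow> nat list set" where
  "words K M = {w. length w = M \<and> set w \<subseteq> {1..K} \<and> (\<forall>i. Suc i < length w \<longrightarrow> w ! i \<noteq> w ! Suc i)}"

definition level_points :: "nat \<Rightarrow> (nat \<Rightarrow> complex) \<Rightarrow> (nat \<Rightarrow> real) \<Rightarrow> nat \<Rightarrow> nat \<Rightarrow> complex option multiset" where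
  "level_points K c R j M =
     image_mset (\<lambda>w. foldr (inversion c R) w (Some (c j))) (mset_set (words K M))"

text \<open>A finite point-vortex sum psi(z) = -(1/2pi) sum Gamma_k log|z - zeta_k| is represented by
  its multiset of charges (zeta_k, Gamma_k).\<close>

definition potential :: "(complex \<times> real) multiset \<Rightarrow> complex \<Rightarrow> real" where
  "potential Q z = - (1 / (2*pi)) * (\<Sum>q\<in>#Q. snd q * ln (cmod (z - fst q)))"

definition psi_charges :: "nat \<Rightarrow> (nat \<Rightarrow> complex) \<Rightarrow> (nat \<Rightarrow> real) \<Rightarrow> real \<Rightarrow> nat \<Rightarrow> nat \<Rightarrow> (complex \<times> real) multiset" where
  "psi_charges K c R \<Gamma> N j =
     (\<Sum>M\<in>{0..N}. image_mset (\<lambda>p. (the p, \<Gamma> * (-1)^M))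
                    (filter_mset (\<lambda>p. p \<noteq> None) (level_points K c R j M)))"

definition scale_charges :: "real \<Rightarrow> (complex \<times> real) multiset \<Rightarrow> (complex \<times> real) multiset" where
  "scale_charges a Q = image_mset (\<lambda>q. (fst q, a * snd q)) Q"

definition psi_star_charges :: "nat \<Rightarrow> (nat \<Rightarrow> complex) \<Rightarrow> (nat \<Rightarrow> real) \<Rightarrow> real \<Rightarrow> nat \<Rightarrow> nat \<Rightarrow> (complex \<times> real) multiset" where
  "psi_star_charges K c R \<Gamma> N j =
     scale_charges ((real K - 1) / real K) (psi_charges K c R \<Gamma> N j)
   + scale_charges (1 / real K) (psi_charges K c R \<Gamma> (Suc N) j)"

text \<open>Circulation of a finite point-vortex sum around the circle |z - a| = r:
  total weight of the charges strictly inside the circle.\<close>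

definition circulation :: "(complex \<times> real) multiset \<Rightarrow> complex \<Rightarrow> real \<Rightarrow> real" where
  "circulation Q a r = (\<Sum>q\<in>#filter_mset (\<lambda>q. cmod (fst q - a) < r) Q. snd q)"

end

theory Submission
  imports Defs
begin

(*
  Every inversion T_a maps the outside of L_a into int L_a. Hence, for an admissible word
  w <> [j], the point T_w(c_j) is finite and lies inside the circle of the first letter of w,
  while T_j(c_j) = infinity. So L_k encloses c_j at level 0 iff k = j, and at level M >= 1 it
  encloses exactly the (K-1)^(M-1) points of the words starting with k, except the dropped
  point infinity of the word [j]. The alternating sum makes the circulation of psi_{N,j} around
  L_k equal to Gamma (2 delta_jk - sum_{m<N} (1-K)^m), and the weights of psi*_{N,j} cancel the
  oscillating tail (1-K)^N of this geometric sum, leaving Gamma (2 delta_jk - 1/K).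
*)

lemma finite_words: "finite (words K M)"
proof -
  have "words K M \<subseteq> {xs. set xs \<subseteq> {1..K} \<and> length xs = M}" by (auto simp: words_def)
  thus ?thesis using finite_lists_length_eq[of "{1..K}" M] finite_subset by blast
qed

lemma words_0: "words K 0 = {[]}"
  by (auto simp: words_def)

lemma words_SucE:
  assumes "w \<in> words K (Suc n)"
  obtains k v where "w = k # v"
  using assms by (cases w) (auto simp: words_def)

lemma Cons_in_words_iff:
  "k # v \<in> words K (Suc n) \<longleftrightarrow> k \<in> {1..K} \<and> v \<in> words K n \<and> (v \<noteq> [] \<longrightarrow> hd v \<noteq> k)"
proof -
  have "(\<forall>i. Suc i < length (k # v) \<longrightarrow> (k # v) ! i \<noteq> (k # v) ! Suc i) \<longleftrightarrow>
        (\<forall>i. Suc i < length v \<longrightarrow> v ! i \<noteq> v ! Suc i) \<and> (v \<noteq> [] \<longrightarrow> hd v \<noteq> k)"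
    (is "?lhs \<longleftrightarrow> ?rhs")
  proof
    assume ?lhs
    then show ?rhs
      by (cases v) (auto dest: spec[of _ 0] spec[of _ "Suc i" for i])
  next
    assume ?rhs
    then show ?lhs
      by (cases v) (auto simp: nth_Cons split: nat.split)
  qed
  then show ?thesis by (auto simp: words_def)
qed

lemma card_words_hd:
  assumes "k \<in> {1..K}"
  shows "card {w \<in> words K (Suc m). hd w = k} = (K - 1) ^ m"
  using assms
proof (induction m arbitrary: k)
  case 0
  then have "{w \<in> words K (Suc 0). hd w = k} = {[k]}"
    by (auto simp: words_def length_Suc_conv)
  then show ?case by simp
next
  case (Suc m)
  let ?tails = "\<Union>b\<in>{1..K} - {k}. {v \<in> words K (Suc m). hd v = b}"
  have "{w \<in> words K (Suc (Suc m)). hd w = k} = (#) k ` ?tails"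
  proof (intro equalityI subsetI)
    fix w assume "w \<in> {w \<in> words K (Suc (Suc m)). hd w = k}"
    then have wK: "w \<in> words K (Suc (Suc m))" "hd w = k" by auto
    then obtain v where w: "w = k # v" by (auto elim: words_SucE)
    with wK have v: "v \<in> words K (Suc m)" "hd v \<noteq> k"
      by (auto simp: Cons_in_words_iff elim: words_SucE)
    have "hd v \<in> {1..K}" using v(1) by (cases v) (auto simp: words_def)
    then show "w \<in> (#) k ` ?tails" using w v by auto
  qed (use Suc.prems in \<open>auto simp: Cons_in_words_iff\<close>)
  then have "card {w \<in> words K (Suc (Suc m)). hd w = k} = card ?tails"
    by (simp add: card_image)
  also have "\<dots> = (\<Sum>b\<in>{1..K} - {k}. card {v \<in> words K (Suc m). hd v = b})"
    by (rule card_UN_disjoint) (auto intro: finite_subset[OF _ finite_words])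
  also have "\<dots> = (\<Sum>b\<in>{1..K} - {k}. (K - 1) ^ m)"
    using Suc.IH by (intro sum.cong) auto
  finally show ?case using Suc.prems by simp
qed

lemma circulation_eq_sum_mset:
  "circulation Q a r = (\<Sum>q\<in>#Q. if cmod (fst q - a) < r then snd q else 0)"
  unfolding circulation_def by (induction Q) auto

lemma circulation_add: "circulation (A + B) a r = circulation A a r + circulation B a r"
  by (simp add: circulation_eq_sum_mset)

lemma circulation_sum:
  "finite S \<Longrightarrow> circulation (\<Sum>M\<in>S. Q M) a r = (\<Sum>M\<in>S. circulation (Q M) a r)"
  by (induction S rule: finite_induct) (auto simp: circulation_add circulation_def)

lemma circulation_scale_charges: "circulation (scale_charges x Q) a r = x * circulation Q a r"
  unfolding circulation_eq_sum_mset scale_charges_def by (induction Q) (auto simp: algebra_simps)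

lemma circulation_uniform_charges:
  assumes "finite W"
  shows "circulation (image_mset (\<lambda>p. (the p, x)) (filter_mset (\<lambda>p. p \<noteq> None) (image_mset f (mset_set W)))) a r
       = x * real (card {w \<in> W. f w \<noteq> None \<and> cmod (the (f w) - a) < r})"
  using assms unfolding circulation_def
  by (simp add: filter_mset_image_mset filter_mset_mset_set image_mset.compositionality o_def
      Collect_conj_eq flip: sum_unfold_sum_mset)

lemma sum_alternating_powers:
  fixes x :: "'a::comm_ring_1"
  shows "(\<Sum>M\<in>{1..N}. (-1) ^ M * (x - 1) ^ (M - 1)) = - (\<Sum>m<N. (1 - x) ^ m)"
proof -
  have "{1..N} = Suc ` {..<N}" by (simp add: image_Suc_lessThan)
  then have "(\<Sum>M\<in>{1..N}. (-1) ^ M * (x - 1) ^ (M - 1)) = (\<Sum>m<N. (-1) ^ Suc m * (x - 1) ^ m)"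
    by (simp add: sum.reindex)
  also have "\<dots> = - (\<Sum>m<N. (1 - x) ^ m)"
    by (simp add: sum_negf flip: power_mult_distrib)
  finally show ?thesis .
qed

lemma inversion_maps_outside_into_disk:
  assumes "R a > 0" "R a < dist (c a) z"
  shows "\<exists>z'. inversion c R a (Some z) = Some z' \<and> dist (c a) z' < R a"
proof -
  have d: "R a < cmod (z - c a)" using assms(2) by (simp add: dist_norm norm_minus_commute)
  have "dist (c a) (c a + complex_of_real ((R a)\<^sup>2) / cnj (z - c a)) = (R a)\<^sup>2 / cmod (z - c a)"
    by (simp add: dist_norm norm_divide norm_power del: complex_cnj_diff)
  also have "\<dots> < R a" using d assms(1) by (simp add: divide_less_eq power2_eq_square)
  finally show ?thesis using d by (auto simp: inversion_def)
qed

locale disjoint_circles =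
  fixes K :: nat and c :: "nat \<Rightarrow> complex" and R :: "nat \<Rightarrow> real"
  assumes radius_pos: "k \<in> {1..K} \<Longrightarrow> R k > 0"
    and disjoint_cballs:
      "k \<in> {1..K} \<Longrightarrow> l \<in> {1..K} \<Longrightarrow> k \<noteq> l \<Longrightarrow> cball (c k) (R k) \<inter> cball (c l) (R l) = {}"
begin

abbreviation word_point :: "nat \<Rightarrow> nat list \<Rightarrow> complex option" where
  "word_point j w \<equiv> foldr (inversion c R) w (Some (c j))"

lemma outside_other_circle:
  assumes "a \<in> {1..K}" "b \<in> {1..K}" "a \<noteq> b" "dist (c b) z \<le> R b"
  shows "R a < dist (c a) z"
  using disjoint_cballs[OF assms(1-3)] assms(4) by (force simp: mem_cball)

lemma center_outside_other_circle:
  "a \<in> {1..K} \<Longrightarrow> b \<in> {1..K} \<Longrightarrow> a \<noteq> b \<Longrightarrow> R a < dist (c a) (c b)"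
  using outside_other_circle radius_pos by fastforce

lemma word_point_in_head_disk:
  assumes "j \<in> {1..K}" "w \<in> words K (length w)" "w \<noteq> []" "w \<noteq> [j]"
  shows "\<exists>z. word_point j w = Some z \<and> dist (c (hd w)) z < R (hd w)"
  using assms(2-4)
proof (induction w)
  case Nil then show ?case by simp
next
  case (Cons a v)
  have a: "a \<in> {1..K}" and v: "v \<in> words K (length v)" and hv: "v \<noteq> [] \<longrightarrow> hd v \<noteq> a"
    using Cons.prems(1) by (auto simp: Cons_in_words_iff)
  consider "v = []" | "v = [j]" | "v \<noteq> []" "v \<noteq> [j]" by blast
  then show ?case
  proof cases
    case 1
    then have "R a < dist (c a) (c j)" using Cons.prems(3) center_outside_other_circle a assms(1) by auto
    then show ?thesis using inversion_maps_outside_into_disk[of R a c "c j"] radius_pos a 1 by auto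
  next
    case 2 \<comment> \<open>T_a(T_j(c_j)) = T_a(infinity) = c_a\<close>
    then show ?thesis using radius_pos a by (simp add: inversion_def)
  next
    case 3
    then obtain z where z: "word_point j v = Some z" "dist (c (hd v)) z < R (hd v)"
      using Cons.IH v by blast
    have "hd v \<in> {1..K}" using v 3 by (cases v) (auto simp: words_def)
    then have "R a < dist (c a) z" using outside_other_circle a hv 3 z(2) by fastforce
    then show ?thesis using inversion_maps_outside_into_disk[of R a c z] radius_pos a z(1) by auto
  qed
qed

lemma level_points_in_disk:
  assumes "j \<in> {1..K}" "k \<in> {1..K}"
  shows "{w \<in> words K (Suc m). word_point j w \<noteq> None \<and> cmod (the (word_point j w) - c k) < R k}
       = {w \<in> words K (Suc m). hd w = k} - {[j]}"
proof (intro set_eqI iffI)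
  fix w
  assume w: "w \<in> {w \<in> words K (Suc m). word_point j w \<noteq> None \<and> cmod (the (word_point j w) - c k) < R k}"
  then have "w \<noteq> [j]" "w \<noteq> []" and wl: "w \<in> words K (length w)"
    by (auto simp: inversion_def words_def)
  then obtain z where z: "word_point j w = Some z" "dist (c (hd w)) z < R (hd w)"
    using word_point_in_head_disk assms(1) by blast
  have "hd w \<in> {1..K}" using wl \<open>w \<noteq> []\<close> by (cases w) (auto simp: words_def)
  then have "hd w = k"
    using outside_other_circle[OF assms(2) _ _ less_imp_le[OF z(2)]] w z(1)
    by (fastforce simp: dist_norm norm_minus_commute)
  then show "w \<in> {w \<in> words K (Suc m). hd w = k} - {[j]}" using w \<open>w \<noteq> [j]\<close> by auto
next
  fix w assume w: "w \<in> {w \<in> words K (Suc m). hd w = k} - {[j]}"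
  then have "w \<noteq> [j]" "w \<noteq> []" "w \<in> words K (length w)" by (auto simp: words_def)
  then obtain z where "word_point j w = Some z" "dist (c (hd w)) z < R (hd w)"
    using word_point_in_head_disk assms(1) by blast
  then show "w \<in> {w \<in> words K (Suc m). word_point j w \<noteq> None \<and> cmod (the (word_point j w) - c k) < R k}"
    using w by (auto simp: dist_norm norm_minus_commute)
qed

lemma card_level_points_in_disk:
  assumes "j \<in> {1..K}" "k \<in> {1..K}"
  shows "card {w \<in> words K M. word_point j w \<noteq> None \<and> cmod (the (word_point j w) - c k) < R k}
       = (if M = 0 then (if k = j then 1 else 0)
          else (K - 1) ^ (M - 1) - (if M = 1 \<and> k = j then 1 else 0))"
proof (cases M)
  case 0
  have "k \<noteq> j \<Longrightarrow> \<not> cmod (c j - c k) < R k"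
    using center_outside_other_circle[OF assms(2,1)] by (simp add: dist_norm norm_minus_commute)
  moreover have "{w \<in> words K 0. P w} = (if P [] then {[]} else {})" for P
    by (auto simp: words_0)
  ultimately show ?thesis using 0 radius_pos[OF assms(1)] by simp
next
  case (Suc m)
  let ?A = "{w \<in> words K (Suc m). hd w = k}"
  have mem: "[j] \<in> ?A \<longleftrightarrow> m = 0 \<and> k = j"
    using assms(1) by (auto simp: words_def)
  have "finite ?A" using finite_words by simp
  then have "card (?A - {[j]}) = card ?A - (if [j] \<in> ?A then 1 else 0)"
    by (cases "[j] \<in> ?A") (simp_all only: card_Diff_singleton_if if_True if_False diff_zero)
  also have "\<dots> = (K - 1) ^ m - (if m = 0 \<and> k = j then 1 else 0)"
    by (simp only: mem card_words_hd[OF assms(2)])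
  finally show ?thesis
    using Suc level_points_in_disk[OF assms, of m] by simp
qed

lemma circulation_psi_charges:
  assumes "j \<in> {1..K}" "k \<in> {1..K}" "N \<ge> 1"
  shows "circulation (psi_charges K c R \<Gamma> N j) (c k) (R k)
       = \<Gamma> * (2 * (if k = j then 1 else 0) - (\<Sum>m<N. (1 - real K) ^ m))"
proof -
  define \<delta> :: real where "\<delta> = (if k = j then 1 else 0)"
  define n where "n M = real (card {w \<in> words K M. word_point j w \<noteq> None
                                     \<and> cmod (the (word_point j w) - c k) < R k})" for M
  have n: "n M = (if M = 0 then \<delta> else (real K - 1) ^ (M - 1)) - (if M = 1 then \<delta> else 0)" for M
    using card_level_points_in_disk[OF assms(1,2), of M] assms(2)
    by (auto simp: n_def \<delta>_def of_nat_diff)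
  have "circulation (psi_charges K c R \<Gamma> N j) (c k) (R k) = \<Gamma> * (\<Sum>M\<in>{0..N}. (-1) ^ M * n M)"
    unfolding psi_charges_def level_points_def circulation_sum[OF finite_atLeastAtMost]
      circulation_uniform_charges[OF finite_words]
    by (simp add: n_def sum_distrib_left mult.assoc)
  also have "(\<Sum>M\<in>{0..N}. (-1) ^ M * n M) = n 0 + (\<Sum>M\<in>{1..N}. (-1) ^ M * n M)"
    by (simp add: sum.atLeast_Suc_atMost)
  also have "(\<Sum>M\<in>{1..N}. (-1) ^ M * n M)
      = (\<Sum>M\<in>{1..N}. (-1) ^ M * (real K - 1) ^ (M - 1) + (if M = 1 then \<delta> else 0))"
    by (intro sum.cong) (auto simp: n)
  also have "\<dots> = (\<Sum>M\<in>{1..N}. (-1) ^ M * (real K - 1) ^ (M - 1)) + \<delta>"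
    using assms(3) by (simp add: sum.distrib)
  also have "n 0 = \<delta>" by (simp add: n)
  finally show ?thesis
    using sum_alternating_powers[where x = "real K"] by (simp add: \<delta>_def)
qed

lemma circulation_psi_star_charges:
  assumes "j \<in> {1..K}" "k \<in> {1..K}" "N \<ge> 1"
  shows "circulation (psi_star_charges K c R \<Gamma> N j) (c k) (R k)
       = \<Gamma> * (2 * (if k = j then 1 else 0) - 1 / real K)"
proof -
  define x where "x = (1 - real K) ^ N"
  have K: "real K > 0" using assms(2) by simp
  have S: "(\<Sum>m<N. (1 - real K) ^ m) = (1 - x) / real K"
    using one_diff_power_eq[of "1 - real K" N] K by (simp add: x_def field_simps)
  have S_Suc: "(\<Sum>m<Suc N. (1 - real K) ^ m) = (1 - (1 - real K) * x) / real K"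
    using K by (simp add: S x_def field_simps)
  show ?thesis
    unfolding psi_star_charges_def circulation_add circulation_scale_charges
      circulation_psi_charges[OF assms] circulation_psi_charges[OF assms(1,2) le_SucI[OF assms(3)]]
      S S_Suc
    using K by (simp add: field_simps)
qed

end

theorem mainTheorem8:
  fixes K N j :: nat and c :: "nat \<Rightarrow> complex" and R :: "nat \<Rightarrow> real" and \<Gamma> :: real
  assumes "K \<ge> 2"
    and "\<And>k. k \<in> {1..K} \<Longrightarrow> R k > 0"
    and "\<And>k l. k \<in> {1..K} \<Longrightarrow> l \<in> {1..K} \<Longrightarrow> k \<noteq> l \<Longrightarrow> cball (c k) (R k) \<inter> cball (c l) (R l) = {}"
    and "j \<in> {1..K}"
    and "N \<ge> 1"
  shows "circulation (psi_star_charges K c R \<Gamma> N j) (c j) (R j) = \<Gamma> * (2 * real K - 1) / real K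
       \<and> (\<forall>k\<in>{1..K}. k \<noteq> j \<longrightarrow> circulation (psi_star_charges K c R \<Gamma> N j) (c k) (R k) = - \<Gamma> / real K)"
proof -
  interpret disjoint_circles K c R
    using assms(2,3) by unfold_locales
  have circ: "circulation (psi_star_charges K c R \<Gamma> N j) (c k) (R k)
      = \<Gamma> * (2 * (if k = j then 1 else 0) - 1 / real K)" if "k \<in> {1..K}" for k
    using circulation_psi_star_charges[OF assms(4) that assms(5)] .
  have "\<Gamma> * (2 - 1 / real K) = \<Gamma> * (2 * real K - 1) / real K"
    using assms(1) by (simp add: field_simps)
  then show ?thesis
    using circ circ[OF assms(4)] by simp
qed

end
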